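(* Let $n\in\mathbb N$. (a) If $a_{\mathbf P}:(0,\infty)\to\mathbb R$, $\mathbf P\in\mathbf{Part}(n)$, are functions such that $\sum_{\mathbf P\in\mathbf{Part}(n)}a_{\mathbf P}(\|\mu\|)(\tau^{\mathbf P}_I)_\mu=0$ for all finite sets $I$ and all $\mu\in\mathcal M_+(I)$, then $a_{\mathbf P}\equiv0$ for all $\mathbf P$. (b) If $c_{\mathbf P}\in\mathbb R$, for $\mathbf P=\{P_1,\dots,P_l\}\in\mathbf{Part}(n)$ with $|P_i|\ge2$ for all $i$, are constants such that $\sum_{\mathbf P}c_{\mathbf P}\tau^{\mathbf P}_I=0$ when restricted to $\mathcal P_+(I)$ (i.e. at points of $\mathcal P_+(I)$ and on tangent vectors in $\mathcal S_0(I)$) for all finite sets $I$, then $c_{\mathbf P}=0$ for all $\mathbf P$. In other words, the functions $a_{\mathbf P}$ and the constants $c_{\mathbf P}$ in such representations are uniquely determined.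
   Context: $\mathbf{Part}(n)$ is the set of partitions of $\{1,\dots,n\}$. For a finite set $I$: $\mathcal S(I)=\{\sum_{i\in I}x_i\delta_i\}$, $\|\sum x_i\delta_i\|=\sum|x_i|$, $\mathcal M_+(I)=\{\sum\mu_i\delta_i:\mu_i>0\}$, $\mathcal P_+(I)=\{\mu\in\mathcal M_+(I):\sum\mu_i=1\}$, $\mathcal S_0(I)=\{\sum x_i\delta_i:\sum x_i=0\}$. For $\mu=\sum\mu_i\delta_i\in\mathcal M_+(I)$ and $V_k=\sum_iV^i_k\delta_i\in\mathcal S(I)$, $(\tau^m_I)_\mu(V_1,\dots,V_m)=\sum_i\mu_i^{1-m}V_1^i\cdots V_m^i$, and for $\mathbf P=\{P_1,\dots,P_l\}\in\mathbf{Part}(n)$, $(\tau^{\mathbf P}_I)_\mu(V_1,\dots,V_n)=\prod_{i=1}^l(\tau^{|P_i|}_I)_\mu((V_j)_{j\in P_i})$. *)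

theory Defs
  imports Complex_Main "HOL-Library.Disjoint_Sets"
begin

definition Part :: "nat \<Rightarrow> nat set set set" where
  "Part n = {P. partition_on {1..n} P}"

text \<open>Elements of S(I) are modelled as functions nat => real (only values on I matter);
  a family V_1,...,V_n is V :: nat => nat => real, with V k i the i-th coordinate of V_k.\<close>

definition snorm :: "nat set \<Rightarrow> (nat \<Rightarrow> real) \<Rightarrow> real" where
  "snorm I x = (\<Sum>i\<in>I. \<bar>x i\<bar>)"

text \<open>(tau^m_I)_mu applied to the vectors (V_j)_{j in B}, where m = |B|.\<close>
definition tau_block :: "nat set \<Rightarrow> (nat \<Rightarrow> real) \<Rightarrow> (nat \<Rightarrow> nat \<Rightarrow> real) \<Rightarrow> nat set \<Rightarrow> real" where
  "tau_block I \<mu> V B = (\<Sum>i\<in>I. \<mu> i powr (1 - real (card B)) * (\<Prod>j\<in>B. V j i))"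

definition tau_part :: "nat set \<Rightarrow> (nat \<Rightarrow> real) \<Rightarrow> nat set set \<Rightarrow> (nat \<Rightarrow> nat \<Rightarrow> real) \<Rightarrow> real" where
  "tau_part I \<mu> P V = (\<Prod>B\<in>P. tau_block I \<mu> V B)"

end

theory Submission
  imports Defs
begin

text \<open>
  For a partition \<open>Q\<close> of \<open>{1..n}\<close> take two atoms per block \<open>B \<in> Q\<close>, of masses \<open>\<alpha>\<close> and \<open>\<beta>\<close>,
  on which every \<open>V j\<close> with \<open>j \<in> B\<close> takes the values \<open>1\<close> and \<open>-s\<close>, plus one spare atom where
  all \<open>V j\<close> vanish. Then \<open>\<tau>\<^sup>m\<close> applied to the vectors indexed by a set \<open>C\<close> of size \<open>m\<close> is
  \<open>\<alpha> powr (1 - m) + (-s)^m * \<beta> powr (1 - m)\<close> if \<open>C\<close> lies inside a block of \<open>Q\<close>, and \<open>0\<close>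
  otherwise; so \<open>\<tau>\<^sup>P\<close> vanishes unless \<open>P\<close> refines \<open>Q\<close>. The linear system obtained from all \<open>Q\<close>
  is therefore triangular with respect to refinement, and its diagonal is nonzero: in (a) take
  \<open>s = 0\<close> and scale the masses to the prescribed norm; in (b) take \<open>s = 1\<close>, which makes the
  vectors tangent, and \<open>\<alpha> \<noteq> \<beta>\<close>, which keeps the block moments nonzero for every block size
  \<open>m \<ge> 2\<close>, while the spare atom absorbs the remaining mass.
\<close>

lemma triangular_coefficients_vanish:
  fixes c :: "'a \<Rightarrow> 'b :: ring_no_zero_divisors"
  assumes "finite S"
    and reflexive: "\<And>x. x \<in> S \<Longrightarrow> le x x"
    and antisymmetric: "\<And>x y. x \<in> S \<Longrightarrow> y \<in> S \<Longrightarrow> le x y \<Longrightarrow> le y x \<Longrightarrow> x = y"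
    and transitive: "\<And>x y z. x \<in> S \<Longrightarrow> y \<in> S \<Longrightarrow> z \<in> S \<Longrightarrow> le x y \<Longrightarrow> le y z \<Longrightarrow> le x z"
    and test: "\<And>x. x \<in> S \<Longrightarrow> \<exists>w. w x \<noteq> 0 \<and> (\<Sum>y\<in>S. c y * (if le y x then w y else 0)) = 0"
  shows "\<forall>x\<in>S. c x = 0"
proof (rule ccontr)
  define less where "less y x \<longleftrightarrow> le y x \<and> y \<noteq> x" for y x
  assume "\<not> (\<forall>x\<in>S. c x = 0)"
  moreover have "asymp_on S less" "transp_on S less"
    using antisymmetric transitive unfolding less_def asymp_on_def transp_on_def by blast+
  ultimately obtain x where x: "x \<in> S" "c x \<noteq> 0" and min: "\<forall>y\<in>S. less y x \<longrightarrow> c y = 0"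
    using Finite_Set.bex_min_element_with_property[OF \<open>finite S\<close>, of less "\<lambda>x. c x \<noteq> 0"] by blast
  obtain w where "w x \<noteq> 0" and w: "(\<Sum>y\<in>S. c y * (if le y x then w y else 0)) = 0"
    using test[OF x(1)] by blast
  have "(\<Sum>y\<in>S. c y * (if le y x then w y else 0)) = (\<Sum>y\<in>S. if y = x then c x * w x else 0)"
    using min reflexive[OF x(1)] unfolding less_def by (intro sum.cong) auto
  with w x \<open>finite S\<close> \<open>w x \<noteq> 0\<close> show False by simp
qed

lemma Min_in_block:
  assumes "partition_on A Q" "finite A" "B \<in> Q"
  shows "Min B \<in> B"
  using assms by (metis Min_in Union_upper finite_subset partition_onD1 partition_onD3)

lemma inj_on_Min_blocks:
  assumes "partition_on A Q" "finite A"
  shows "inj_on Min Q"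
proof (rule inj_onI)
  fix B B' assume "B \<in> Q" "B' \<in> Q" "Min B = Min B'"
  then have "Min B \<in> B \<inter> B'" using Min_in_block[OF assms] by (metis IntI)
  with \<open>B \<in> Q\<close> \<open>B' \<in> Q\<close> show "B = B'"
    using partition_onD2[OF assms(1)] by (auto dest: disjointD)
qed

text \<open>Block \<open>B\<close> of \<open>Q\<close> occupies the atoms \<open>2 * Min B + 1\<close> (mass \<open>\<alpha>\<close>) and \<open>2 * Min B + 2\<close>
  (mass \<open>\<beta>\<close>); the atom \<open>0\<close> is the spare one, of mass \<open>\<gamma>\<close>.\<close>

definition test_points :: "nat set set \<Rightarrow> nat set" where
  "test_points Q = insert 0 ((\<lambda>B. 2 * Min B + 1) ` Q \<union> (\<lambda>B. 2 * Min B + 2) ` Q)"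

definition test_measure :: "real \<Rightarrow> real \<Rightarrow> real \<Rightarrow> nat \<Rightarrow> real" where
  "test_measure \<gamma> \<alpha> \<beta> i = (if i = 0 then \<gamma> else if odd i then \<alpha> else \<beta>)"

definition test_vectors :: "nat set set \<Rightarrow> real \<Rightarrow> nat \<Rightarrow> nat \<Rightarrow> real" where
  "test_vectors Q s j i =
     (if \<exists>B\<in>Q. j \<in> B \<and> i = 2 * Min B + 1 then 1
      else if \<exists>B\<in>Q. j \<in> B \<and> i = 2 * Min B + 2 then - s else 0)"

definition block_moment :: "real \<Rightarrow> real \<Rightarrow> real \<Rightarrow> nat \<Rightarrow> real" where
  "block_moment \<alpha> \<beta> s m = \<alpha> powr (1 - real m) + (- s) ^ m * \<beta> powr (1 - real m)"

lemma finite_test_points: "finite Q \<Longrightarrow> finite (test_points Q)"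
  by (simp add: test_points_def)

lemma sum_test_points:
  assumes "partition_on A Q" "finite A"
  shows "(\<Sum>i\<in>test_points Q. F i) = F 0 + (\<Sum>B\<in>Q. F (2 * Min B + 1) + F (2 * Min B + 2))"
proof -
  have "finite Q" using finite_elements[OF assms(2,1)] .
  have inj: "inj_on (\<lambda>B. 2 * Min B + k) Q" for k :: nat
    using inj_on_Min_blocks[OF assms] by (auto simp: inj_on_def)
  have "(\<lambda>B. 2 * Min B + 1) ` Q \<inter> (\<lambda>B. 2 * Min B + 2) ` Q = {}"
    by auto presburger
  then have "(\<Sum>i\<in>test_points Q. F i)
      = F 0 + ((\<Sum>i\<in>(\<lambda>B. 2 * Min B + 1) ` Q. F i) + (\<Sum>i\<in>(\<lambda>B. 2 * Min B + 2) ` Q. F i))"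
    unfolding test_points_def using \<open>finite Q\<close> by (subst sum.insert) (auto simp: sum.union_disjoint)
  also have "\<dots> = F 0 + (\<Sum>B\<in>Q. F (2 * Min B + 1) + F (2 * Min B + 2))"
    by (simp only: sum.reindex[OF inj] comp_def sum.distrib)
  finally show ?thesis .
qed

lemma test_measure_values:
  "test_measure \<gamma> \<alpha> \<beta> 0 = \<gamma>"
  "test_measure \<gamma> \<alpha> \<beta> (2 * m + 1) = \<alpha>"
  "test_measure \<gamma> \<alpha> \<beta> (2 * m + 2) = \<beta>"
  by (simp_all add: test_measure_def)

lemma test_vectors_at_0: "test_vectors Q s j 0 = 0"
  by (simp add: test_vectors_def)

lemma test_vectors_values:
  assumes "partition_on A Q" "finite A" "B \<in> Q"
  shows "test_vectors Q s j (2 * Min B + 1) = (if j \<in> B then 1 else 0)"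
    and "test_vectors Q s j (2 * Min B + 2) = (if j \<in> B then - s else 0)"
proof -
  have same: "2 * Min B + k = 2 * Min B' + k \<longleftrightarrow> B = B'" if "B' \<in> Q" for B' and k :: nat
    using inj_on_Min_blocks[OF assms(1,2)] assms(3) that by (auto dest: inj_onD)
  show "test_vectors Q s j (2 * Min B + 1) = (if j \<in> B then 1 else 0)"
    unfolding test_vectors_def using same[of _ 1] assms(3) by (auto; presburger)
  show "test_vectors Q s j (2 * Min B + 2) = (if j \<in> B then - s else 0)"
    unfolding test_vectors_def using same[of _ 2] assms(3) by (auto; presburger)
qed

lemma prod_indicator_power:
  fixes x :: "'a :: comm_semiring_1"
  assumes "finite C"
  shows "(\<Prod>j\<in>C. if j \<in> B then x else 0) = (if C \<subseteq> B then x ^ card C else 0)"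
proof (cases "C \<subseteq> B")
  case True
  then have "(\<Prod>j\<in>C. if j \<in> B then x else 0) = (\<Prod>j\<in>C. x)"
    by (intro prod.cong) auto
  with True show ?thesis by simp
next
  case False
  then obtain j where "j \<in> C" "j \<notin> B" by blast
  then have "(\<Prod>j\<in>C. if j \<in> B then x else 0) = 0"
    using assms by (intro prod_zero) auto
  with False show ?thesis by simp
qed

lemma tau_block_test:
  assumes Q: "partition_on A Q" "finite A" and C: "finite C" "C \<noteq> {}"
  shows "tau_block (test_points Q) (test_measure \<gamma> \<alpha> \<beta>) (test_vectors Q s) C
       = (if \<exists>B\<in>Q. C \<subseteq> B then block_moment \<alpha> \<beta> s (card C) else 0)"
proof -
  let ?m = "1 - real (card C)"
  have at_0: "(\<Prod>j\<in>C. test_vectors Q s j 0) = 0"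
    using C by (simp add: test_vectors_at_0 card_gt_0_iff)
  have at_B: "test_measure \<gamma> \<alpha> \<beta> (2 * Min B + 1) powr ?m * (\<Prod>j\<in>C. test_vectors Q s j (2 * Min B + 1))
      + test_measure \<gamma> \<alpha> \<beta> (2 * Min B + 2) powr ?m * (\<Prod>j\<in>C. test_vectors Q s j (2 * Min B + 2))
      = (if C \<subseteq> B then block_moment \<alpha> \<beta> s (card C) else 0)" if "B \<in> Q" for B
    unfolding test_measure_values test_vectors_values[OF Q that] prod_indicator_power[OF C(1)]
    by (simp add: block_moment_def mult.commute)
  have "tau_block (test_points Q) (test_measure \<gamma> \<alpha> \<beta>) (test_vectors Q s) C
      = (\<Sum>B\<in>Q. if C \<subseteq> B then block_moment \<alpha> \<beta> s (card C) else 0)"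
    unfolding tau_block_def sum_test_points[OF Q] at_0 using at_B by simp
  also have "\<dots> = (if \<exists>B\<in>Q. C \<subseteq> B then block_moment \<alpha> \<beta> s (card C) else 0)"
  proof (cases "\<exists>B\<in>Q. C \<subseteq> B")
    case True
    then obtain B where B: "B \<in> Q" "C \<subseteq> B" by blast
    have "C \<subseteq> B' \<longleftrightarrow> B' = B" if "B' \<in> Q" for B'
      using partition_onD2[OF Q(1)] B C(2) that by (auto dest: disjointD)
    then have "(\<Sum>B'\<in>Q. if C \<subseteq> B' then block_moment \<alpha> \<beta> s (card C) else 0)
        = (\<Sum>B'\<in>Q. if B' = B then block_moment \<alpha> \<beta> s (card C) else 0)"
      by (intro sum.cong) auto
    with True B finite_elements[OF Q(2,1)] show ?thesis by simp
  qed simp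
  finally show ?thesis .
qed

lemma tau_part_test:
  assumes Q: "partition_on A Q" "finite A" and P: "partition_on A P"
  shows "tau_part (test_points Q) (test_measure \<gamma> \<alpha> \<beta>) P (test_vectors Q s)
       = (if refines A P Q then (\<Prod>C\<in>P. block_moment \<alpha> \<beta> s (card C)) else 0)"
proof -
  have "finite C" "C \<noteq> {}" if "C \<in> P" for C
    using that P Q(2) partition_onD3[OF P] unfolding partition_onD1[OF P]
    by (auto intro: finite_subset)
  then have "tau_part (test_points Q) (test_measure \<gamma> \<alpha> \<beta>) P (test_vectors Q s)
      = (\<Prod>C\<in>P. if \<exists>B\<in>Q. C \<subseteq> B then block_moment \<alpha> \<beta> s (card C) else 0)"
    unfolding tau_part_def by (intro prod.cong) (simp_all add: tau_block_test[OF Q])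
  also have "\<dots> = (if refines A P Q then (\<Prod>C\<in>P. block_moment \<alpha> \<beta> s (card C)) else 0)"
  proof (cases "refines A P Q")
    case True
    then show ?thesis by (auto simp: refines_def intro: prod.cong)
  next
    case False
    then obtain C where "C \<in> P" "\<not> (\<exists>B\<in>Q. C \<subseteq> B)"
      using P Q(1) by (auto simp: refines_def)
    with False finite_elements[OF Q(2) P] show ?thesis
      by (simp add: prod_zero_iff) blast
  qed
  finally show ?thesis .
qed

lemma coefficients_vanish_by_test_configurations:
  fixes c :: "nat set set \<Rightarrow> real"
  assumes A: "finite A" and S: "S \<subseteq> {P. partition_on A P}"
    and test: "\<And>Q. Q \<in> S \<Longrightarrow> \<exists>\<gamma> \<alpha> \<beta> s. (\<forall>C\<in>Q. block_moment \<alpha> \<beta> s (card C) \<noteq> 0) \<and>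
        (\<Sum>P\<in>S. c P * tau_part (test_points Q) (test_measure \<gamma> \<alpha> \<beta>) P (test_vectors Q s)) = 0"
  shows "\<forall>Q\<in>S. c Q = 0"
proof (rule triangular_coefficients_vanish[where le = "refines A"])
  show "finite S"
    using finitely_many_partition_on[OF A] S by (rule finite_subset[rotated])
  show "refines A Q Q" if "Q \<in> S" for Q
    using that S by (auto intro: refines_refl)
  show "P = Q" if "refines A P Q" "refines A Q P" for P Q
    using that by (rule refines_asym)
  show "refines A P R" if "refines A P Q" "refines A Q R" for P Q R
    using that by (rule refines_trans)
next
  fix Q assume "Q \<in> S"
  then obtain \<gamma> \<alpha> \<beta> s where nonzero: "\<forall>C\<in>Q. block_moment \<alpha> \<beta> s (card C) \<noteq> 0"
    and vanish: "(\<Sum>P\<in>S. c P * tau_part (test_points Q) (test_measure \<gamma> \<alpha> \<beta>) P (test_vectors Q s)) = 0"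
    using test by blast
  define w where "w P = (\<Prod>C\<in>P. block_moment \<alpha> \<beta> s (card C))" for P :: "nat set set"
  have "partition_on A Q" using \<open>Q \<in> S\<close> S by blast
  then have "w Q \<noteq> 0"
    using nonzero finite_elements[OF A] by (simp add: w_def prod_zero_iff)
  moreover have "(\<Sum>P\<in>S. c P * (if refines A P Q then w P else 0)) = 0"
    unfolding w_def using vanish S tau_part_test[OF \<open>partition_on A Q\<close> A]
    by (simp add: subset_iff cong: sum.cong)
  ultimately show "\<exists>w. w Q \<noteq> 0 \<and> (\<Sum>P\<in>S. c P * (if refines A P Q then w P else 0)) = 0"
    by blast
qed

lemma block_moment_zero_nonzero:
  assumes "0 < \<alpha>" "0 < \<beta>"
  shows "block_moment \<alpha> \<beta> 0 m \<noteq> 0"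
  using assms by (cases m) (simp_all add: block_moment_def add_pos_pos)

lemma block_moment_one_nonzero:
  assumes "0 < \<alpha>" "\<alpha> < \<beta>" "m \<noteq> 1"
  shows "block_moment \<alpha> \<beta> 1 m \<noteq> 0"
proof (cases "even m")
  case True
  have "0 < \<alpha> powr (1 - real m) + \<beta> powr (1 - real m)"
    using assms by (intro add_pos_pos) auto
  with True show ?thesis by (simp add: block_moment_def)
next
  case False
  with assms have "m > 1" by (cases m) auto
  then have "\<beta> powr (1 - real m) < \<alpha> powr (1 - real m)"
    using assms by (intro powr_less_mono2_neg) auto
  with False show ?thesis by (simp add: block_moment_def)
qed

lemma Part_partition_on: "Part n \<subseteq> {P. partition_on {1..n} P}"
  by (simp add: Part_def)

lemma tau_expansion_coefficients_unique:
  fixes a :: "nat set set \<Rightarrow> real \<Rightarrow> real"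
  assumes expansion: "\<And>I \<mu> V. finite I \<Longrightarrow> I \<noteq> {} \<Longrightarrow> \<forall>i\<in>I. 0 < \<mu> i \<Longrightarrow>
      (\<Sum>P\<in>Part n. a P (snorm I \<mu>) * tau_part I \<mu> P V) = 0"
    and "0 < t"
  shows "\<forall>P\<in>Part n. a P t = 0"
proof (rule coefficients_vanish_by_test_configurations[OF finite_atLeastAtMost Part_partition_on])
  fix Q assume "Q \<in> Part n"
  then have Q: "partition_on {1..n} Q" "finite {1..n}" by (simp_all add: Part_def)
  define \<alpha> where "\<alpha> = t / (2 * card Q + 1)"
  have "0 < \<alpha>" using \<open>0 < t\<close> by (simp add: \<alpha>_def)
  have "snorm (test_points Q) (test_measure \<alpha> \<alpha> \<alpha>) = \<alpha> * (2 * card Q + 1)"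
    using \<open>0 < \<alpha>\<close> by (simp add: snorm_def sum_test_points[OF Q] test_measure_def algebra_simps)
  also have "\<dots> = t" by (simp add: \<alpha>_def)
  finally have "(\<Sum>P\<in>Part n. a P t * tau_part (test_points Q) (test_measure \<alpha> \<alpha> \<alpha>) P (test_vectors Q 0)) = 0"
    using expansion[of "test_points Q"] finite_test_points finite_elements[OF Q(2,1)] \<open>0 < \<alpha>\<close>
    by (force simp: test_points_def test_measure_def)
  then show "\<exists>\<gamma> \<alpha> \<beta> s. (\<forall>C\<in>Q. block_moment \<alpha> \<beta> s (card C) \<noteq> 0) \<and>
      (\<Sum>P\<in>Part n. a P t * tau_part (test_points Q) (test_measure \<gamma> \<alpha> \<beta>) P (test_vectors Q s)) = 0"
    using block_moment_zero_nonzero[OF \<open>0 < \<alpha>\<close> \<open>0 < \<alpha>\<close>] by blast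
qed

lemma tau_expansion_coefficients_unique_on_simplex:
  fixes c :: "nat set set \<Rightarrow> real"
  assumes expansion: "\<And>I \<mu> V. finite I \<Longrightarrow> \<forall>i\<in>I. 0 < \<mu> i \<Longrightarrow> (\<Sum>i\<in>I. \<mu> i) = 1 \<Longrightarrow>
      \<forall>k\<in>{1..n}. (\<Sum>i\<in>I. V k i) = 0 \<Longrightarrow>
      (\<Sum>P\<in>{P\<in>Part n. \<forall>B\<in>P. 2 \<le> card B}. c P * tau_part I \<mu> P V) = 0"
  shows "\<forall>P\<in>{P\<in>Part n. \<forall>B\<in>P. 2 \<le> card B}. c P = 0"
proof (rule coefficients_vanish_by_test_configurations[OF finite_atLeastAtMost])
  show "{P\<in>Part n. \<forall>B\<in>P. 2 \<le> card B} \<subseteq> {P. partition_on {1..n} P}"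
    using Part_partition_on by blast
next
  fix Q assume "Q \<in> {P\<in>Part n. \<forall>B\<in>P. 2 \<le> card B}"
  then have Q: "partition_on {1..n} Q" "finite {1..n}" and big: "\<forall>B\<in>Q. 2 \<le> card B"
    by (simp_all add: Part_def)
  define \<alpha> :: real where "\<alpha> = 1 / (3 * (card Q + 1))"
  have "0 < \<alpha>" by (simp add: \<alpha>_def)
  have "(\<Sum>i\<in>test_points Q. test_measure (3 * \<alpha>) \<alpha> (2 * \<alpha>) i) = 3 * \<alpha> * (card Q + 1)"
    by (simp add: sum_test_points[OF Q] test_measure_def algebra_simps)
  also have "\<dots> = 1" by (simp add: \<alpha>_def)
  finally have mass: "(\<Sum>i\<in>test_points Q. test_measure (3 * \<alpha>) \<alpha> (2 * \<alpha>) i) = 1" .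
  have tangent: "(\<Sum>i\<in>test_points Q. test_vectors Q 1 k i) = 0" for k
  proof -
    have "test_vectors Q 1 k (2 * Min B + 1) + test_vectors Q 1 k (2 * Min B + 2) = 0" if "B \<in> Q" for B
      unfolding test_vectors_values[OF Q that] by simp
    then show ?thesis
      unfolding sum_test_points[OF Q] test_vectors_at_0 by simp
  qed
  have "(\<Sum>P\<in>{P\<in>Part n. \<forall>B\<in>P. 2 \<le> card B}.
      c P * tau_part (test_points Q) (test_measure (3 * \<alpha>) \<alpha> (2 * \<alpha>)) P (test_vectors Q 1)) = 0"
    using \<open>0 < \<alpha>\<close> finite_elements[OF Q(2,1)] mass tangent
    by (intro expansion) (auto simp: finite_test_points test_measure_def)
  moreover have "\<forall>C\<in>Q. block_moment \<alpha> (2 * \<alpha>) 1 (card C) \<noteq> 0"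
  proof
    fix C assume "C \<in> Q"
    with big have "card C \<noteq> 1" by fastforce
    with \<open>0 < \<alpha>\<close> show "block_moment \<alpha> (2 * \<alpha>) 1 (card C) \<noteq> 0"
      by (intro block_moment_one_nonzero) auto
  qed
  ultimately show "\<exists>\<gamma> \<alpha> \<beta> s. (\<forall>C\<in>Q. block_moment \<alpha> \<beta> s (card C) \<noteq> 0) \<and>
      (\<Sum>P\<in>{P\<in>Part n. \<forall>B\<in>P. 2 \<le> card B}.
        c P * tau_part (test_points Q) (test_measure \<gamma> \<alpha> \<beta>) P (test_vectors Q s)) = 0"
    by blast
qed

theorem lemma4p2:
  fixes n :: nat
  shows
  "(\<forall>a :: nat set set \<Rightarrow> real \<Rightarrow> real.
      (\<forall>(I :: nat set) (\<mu> :: nat \<Rightarrow> real) (V :: nat \<Rightarrow> nat \<Rightarrow> real).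
         finite I \<longrightarrow> I \<noteq> {} \<longrightarrow> (\<forall>i\<in>I. 0 < \<mu> i) \<longrightarrow>
         (\<Sum>P\<in>Part n. a P (snorm I \<mu>) * tau_part I \<mu> P V) = 0)
      \<longrightarrow> (\<forall>P\<in>Part n. \<forall>t>0. a P t = 0))
   \<and>
   (\<forall>c :: nat set set \<Rightarrow> real.
      (\<forall>(I :: nat set) (\<mu> :: nat \<Rightarrow> real) (V :: nat \<Rightarrow> nat \<Rightarrow> real).
         finite I \<longrightarrow> (\<forall>i\<in>I. 0 < \<mu> i) \<longrightarrow> (\<Sum>i\<in>I. \<mu> i) = 1 \<longrightarrow>
         (\<forall>k\<in>{1..n}. (\<Sum>i\<in>I. V k i) = 0) \<longrightarrow>
         (\<Sum>P\<in>{P\<in>Part n. \<forall>B\<in>P. 2 \<le> card B}. c P * tau_part I \<mu> P V) = 0)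
      \<longrightarrow> (\<forall>P\<in>{P\<in>Part n. \<forall>B\<in>P. 2 \<le> card B}. c P = 0))"
  using tau_expansion_coefficients_unique[where n = n]
    tau_expansion_coefficients_unique_on_simplex[where n = n]
  by blast

end
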